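(* Fix $0<r<1$ and $\alpha=r/\sqrt{1+r^2}$, $\beta=1/\sqrt{1+r^2}$. For $n\ge2$ let $\gamma_+^{(n)}=1-r^{2/n}$ and let $\gamma_-^{(n)}$ be the unique root in $(0,\gamma_+^{(n)})$ of $f_n(\gamma)=\alpha^2+\beta^2\gamma^n-\alpha\beta(1-\gamma)^{n/2}$. Then $\Delta_n:=\gamma_+^{(n)}-\gamma_-^{(n)}$ satisfies $$\Delta_n\le\frac2n\,r^{2/n-2}\bigl(\gamma_+^{(n)}\bigr)^n,$$ and consequently, with $\tau=\ln(1/r)$, $\Delta_n=O\!\left((2\tau)^n/n^{n+1}\right)$ as $n\to\infty$.
   Context: $[\gamma_-^{(n)},\gamma_+^{(n)}]$ is the stabilizer window of the amplitude-damped state $\mathcal E_\gamma^{\otimes n}(|\psi_n\rangle\langle\psi_n|)$, $|\psi_n\rangle=\alpha|0^n\rangle+\beta|1^n\rangle$. *)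

theory Defs
  imports "HOL-Analysis.Analysis" "HOL-Library.Landau_Symbols"
begin

definition amp_alpha :: "real \<Rightarrow> real" where
  "amp_alpha r = r / sqrt (1 + r^2)"

definition amp_beta :: "real \<Rightarrow> real" where
  "amp_beta r = 1 / sqrt (1 + r^2)"

definition gamma_plus :: "real \<Rightarrow> nat \<Rightarrow> real" where
  "gamma_plus r n = 1 - r powr (2 / real n)"

definition f_amp :: "real \<Rightarrow> nat \<Rightarrow> real \<Rightarrow> real" where
  "f_amp r n g = (amp_alpha r)^2 + (amp_beta r)^2 * g ^ n
      - amp_alpha r * amp_beta r * (1 - g) powr (real n / 2)"

definition gamma_minus :: "real \<Rightarrow> nat \<Rightarrow> real" where
  "gamma_minus r n = (THE g. 0 < g \<and> g < gamma_plus r n \<and> f_amp r n g = 0)"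

definition window_width :: "real \<Rightarrow> nat \<Rightarrow> real" where
  "window_width r n = gamma_plus r n - gamma_minus r n"

end

theory Submission
  imports Defs
begin

text \<open>Since \<open>\<alpha> = r \<beta>\<close>, the roots of \<open>f\<^sub>n\<close> are those of
  \<open>h(\<gamma>) = r\<^sup>2 + \<gamma>^n - r (1 - \<gamma>)^(n/2)\<close>, which is strictly increasing on \<open>[0,1]\<close>,
  negative at \<open>0\<close>, and equals \<open>\<gamma>\<^sub>+^n > 0\<close> at \<open>\<gamma>\<^sub>+\<close> because
  \<open>(1 - \<gamma>\<^sub>+)^(n/2) = r\<close>; so the root \<open>\<gamma>\<^sub>-\<close> exists and is unique.
  As \<open>h(\<gamma>\<^sub>-) = 0\<close>, the increment \<open>h(\<gamma>\<^sub>+) - h(\<gamma>\<^sub>-) = \<gamma>\<^sub>+^n\<close> dominates the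
  drop of \<open>r (1 - \<gamma>)^(n/2)\<close> between \<open>\<gamma>\<^sub>-\<close> and \<open>\<gamma>\<^sub>+\<close>, which by convexity of
  \<open>t^(n/2)\<close> is at least its tangent slope at \<open>1 - \<gamma>\<^sub>+\<close> times \<open>\<Delta>\<^sub>n\<close>.
  The asymptotic bound then follows from \<open>\<gamma>\<^sub>+ = 1 - e^(-2\<tau>/n) \<le> 2\<tau>/n\<close>.\<close>

lemma powr_diff_ge_tangent:
  fixes x y p :: real
  assumes "0 < y" "0 < x" "1 \<le> p"
  shows "p * y powr (p - 1) * (x - y) \<le> x powr p - y powr p"
  using assms
  by (intro convex_on_imp_above_tangent[OF powr_convex[OF \<open>1 \<le> p\<close>]])
     (auto intro!: derivative_eq_intros simp: interior_open)

lemma one_minus_powr_le: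
  fixes r a :: real
  assumes "0 < r"
  shows "1 - r powr a \<le> a * ln (1 / r)"
proof -
  have "1 + a * ln r \<le> r powr a"
    using exp_ge_add_one_self[of "a * ln r"] assms by (simp add: powr_def mult.commute)
  then show ?thesis using assms by (simp add: ln_div)
qed

definition f_amp_core :: "real \<Rightarrow> nat \<Rightarrow> real \<Rightarrow> real" where
  "f_amp_core r n g = r^2 + g ^ n - r * (1 - g) powr (real n / 2)"

lemma f_amp_eq_core: "f_amp r n g = (amp_beta r)^2 * f_amp_core r n g"
proof -
  have "amp_alpha r = r * amp_beta r" unfolding amp_alpha_def amp_beta_def by simp
  then show ?thesis
    unfolding f_amp_def f_amp_core_def by (simp add: algebra_simps power2_eq_square)
qed

lemma f_amp_eq_0_iff: "f_amp r n g = 0 \<longleftrightarrow> f_amp_core r n g = 0"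
proof -
  have "0 < 1 + r^2" by (simp add: add_pos_nonneg)
  then have "amp_beta r \<noteq> 0" unfolding amp_beta_def by simp
  then show ?thesis by (simp add: f_amp_eq_core)
qed

lemma f_amp_core_strict_mono:
  assumes "0 < r" "0 < n" "0 \<le> g1" "g1 < g2" "g2 \<le> 1"
  shows "f_amp_core r n g1 < f_amp_core r n g2"
proof -
  have "g1 ^ n \<le> g2 ^ n" using assms by (intro power_mono) auto
  moreover have "(1 - g2) powr (real n / 2) < (1 - g1) powr (real n / 2)"
    using assms by (intro powr_less_mono2) auto
  then have "r * (1 - g2) powr (real n / 2) < r * (1 - g1) powr (real n / 2)"
    using assms(1) by (rule mult_strict_left_mono)
  ultimately show ?thesis unfolding f_amp_core_def by linarith
qed

lemma f_amp_core_0_neg: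
  assumes "0 < r" "r < 1" "0 < n"
  shows "f_amp_core r n 0 < 0"
  using assms mult_strict_left_mono[of r 1 r]
  by (simp add: f_amp_core_def power2_eq_square zero_power)

lemma gamma_plus_bounds:
  assumes "0 < r" "r < 1" "0 < n"
  shows "0 < gamma_plus r n" "gamma_plus r n < 1"
  using assms powr_less_mono'[of r 0 "2 / real n"] by (simp_all add: gamma_plus_def)

lemma one_minus_gamma_plus_powr:
  assumes "0 < r" "0 < n"
  shows "(1 - gamma_plus r n) powr (real n / 2) = r"
  using assms by (simp add: gamma_plus_def powr_powr)

lemma f_amp_core_gamma_plus:
  assumes "0 < r" "0 < n"
  shows "f_amp_core r n (gamma_plus r n) = gamma_plus r n ^ n"
  using one_minus_gamma_plus_powr[OF assms]
  by (simp add: f_amp_core_def power2_eq_square)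

lemma f_amp_root_unique:
  assumes "0 < r" "r < 1" "0 < n"
  shows "\<exists>!g. 0 < g \<and> g < gamma_plus r n \<and> f_amp r n g = 0"
proof -
  note gp = gamma_plus_bounds[OF assms]
  have neg: "f_amp_core r n 0 < 0" by (rule f_amp_core_0_neg[OF assms])
  have pos: "f_amp_core r n (gamma_plus r n) > 0"
    using f_amp_core_gamma_plus[of r n] assms gp by simp
  have "continuous_on {0..gamma_plus r n} (f_amp_core r n)"
    unfolding f_amp_core_def using gp by (intro continuous_intros) auto
  then obtain x where x: "0 \<le> x" "x \<le> gamma_plus r n" "f_amp_core r n x = 0"
    using IVT'[of "f_amp_core r n" 0 0 "gamma_plus r n"] neg pos gp by auto
  have "x \<noteq> 0" "x \<noteq> gamma_plus r n" using x neg pos by auto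
  with x have "0 < x \<and> x < gamma_plus r n \<and> f_amp_core r n x = 0" by simp
  moreover have "g = x" if "0 < g \<and> g < gamma_plus r n \<and> f_amp_core r n g = 0" for g
    using that x gp f_amp_core_strict_mono[of r n g x] f_amp_core_strict_mono[of r n x g] assms
    by (cases g x rule: linorder_cases) auto
  ultimately show ?thesis unfolding f_amp_eq_0_iff by blast
qed

lemma gamma_minus_root:
  assumes "0 < r" "r < 1" "0 < n"
  shows "0 < gamma_minus r n" "gamma_minus r n < gamma_plus r n"
    "f_amp_core r n (gamma_minus r n) = 0"
  using theI'[OF f_amp_root_unique[OF assms]]
  unfolding gamma_minus_def f_amp_eq_0_iff by auto

lemma window_width_pos:
  assumes "0 < r" "r < 1" "0 < n"
  shows "0 < window_width r n"
  using gamma_minus_root(2)[OF assms] by (simp add: window_width_def)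

lemma window_width_le:
  assumes "0 < r" "r < 1" "2 \<le> n"
  shows "window_width r n \<le> 2 / real n * r powr (2 / real n - 2) * gamma_plus r n ^ n"
proof -
  define p where "p = real n / 2"
  define y where "y = 1 - gamma_plus r n"
  define x where "x = gamma_minus r n"
  have n: "0 < n" "1 \<le> p" using assms(3) by (auto simp: p_def)
  note gp = gamma_plus_bounds[OF assms(1,2) n(1)]
  note gm = gamma_minus_root[OF assms(1,2) n(1)]
  have y: "0 < y" "y powr p = r"
    using gp one_minus_gamma_plus_powr[OF assms(1) n(1)] by (auto simp: y_def p_def)
  define K where "K = real n / 2 * r powr (2 - 2 / real n)"
  have K: "r * (p * y powr (p - 1)) = K"
  proof -
    have "2 / real n * (real n / 2 - 1) = 1 - 2 / real n" using n by (simp add: field_simps)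
    then have "y powr (p - 1) = r powr (1 - 2 / real n)"
      by (simp add: y_def p_def gamma_plus_def powr_powr)
    moreover have "r powr (2 - 2 / real n) = r * r powr (1 - 2 / real n)"
      using assms(1) powr_add[of r 1 "1 - 2 / real n"] by simp
    ultimately show ?thesis by (simp add: K_def p_def)
  qed
  have "K * window_width r n = r * (p * y powr (p - 1) * ((1 - x) - y))"
    by (simp add: K[symmetric] window_width_def x_def y_def)
  also have "\<dots> \<le> r * ((1 - x) powr p - y powr p)"
    using powr_diff_ge_tangent[of y "1 - x" p] y gm gp n assms(1)
    by (intro mult_left_mono) (auto simp: x_def)
  also have "\<dots> = f_amp_core r n (gamma_plus r n) - f_amp_core r n x - (gamma_plus r n ^ n - x ^ n)"
    by (simp add: f_amp_core_def x_def y_def p_def algebra_simps)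
  also have "\<dots> \<le> gamma_plus r n ^ n"
    using f_amp_core_gamma_plus[OF assms(1) n(1)] gm power_mono[of x "gamma_plus r n" n]
    by (simp add: x_def)
  finally have "K * window_width r n \<le> gamma_plus r n ^ n" .
  moreover have "0 < K" using n assms(1) by (simp add: K_def)
  ultimately have "window_width r n \<le> gamma_plus r n ^ n / K"
    by (simp add: pos_le_divide_eq mult.commute)
  moreover have "2 / real n * r powr (2 / real n - 2) = 1 / K"
    using powr_minus_divide[of r "2 - 2 / real n"] by (simp add: K_def)
  ultimately show ?thesis by simp
qed

lemma window_width_le_power:
  assumes "0 < r" "r < 1" "2 \<le> n"
  shows "window_width r n \<le> 2 * r powr (-2) * ((2 * ln (1 / r)) ^ n / real n ^ (n + 1))"
proof -
  have n: "0 < real n" using assms(3) by simp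
  have gp: "0 < gamma_plus r n" using gamma_plus_bounds[OF assms(1,2)] assms(3) by simp
  have "gamma_plus r n \<le> 2 * ln (1 / r) / real n"
    using one_minus_powr_le[OF assms(1), of "2 / real n"] by (simp add: gamma_plus_def)
  then have pw: "gamma_plus r n ^ n \<le> (2 * ln (1 / r) / real n) ^ n"
    using gp by (intro power_mono) auto
  have rp: "r powr (2 / real n - 2) \<le> r powr (-2)"
    using assms n by (intro powr_mono') auto
  have "window_width r n \<le> 2 / real n * r powr (2 / real n - 2) * gamma_plus r n ^ n"
    by (rule window_width_le[OF assms])
  also have "\<dots> \<le> 2 / real n * r powr (-2) * (2 * ln (1 / r) / real n) ^ n"
    using rp pw gp n by (intro mult_mono mult_left_mono) auto
  also have "\<dots> = 2 * r powr (-2) * ((2 * ln (1 / r)) ^ n / real n ^ (n + 1))"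
    using n by (simp add: power_divide)
  finally show ?thesis .
qed

theorem proposition3:
  fixes r :: real
  assumes "0 < r" and "r < 1"
  shows "(\<forall>n\<ge>2. \<exists>!g. 0 < g \<and> g < gamma_plus r n \<and> f_amp r n g = 0)
    \<and> (\<forall>n\<ge>2. window_width r n
          \<le> 2 / real n * r powr (2 / real n - 2) * (gamma_plus r n) ^ n)
    \<and> (\<lambda>n. window_width r n) \<in>
        O(\<lambda>n. (2 * ln (1 / r)) ^ n / (real n) ^ (n + 1))"
proof -
  have "norm (window_width r n)
      \<le> 2 * r powr (-2) * norm ((2 * ln (1 / r)) ^ n / real n ^ (n + 1))" if "2 \<le> n" for n
    using window_width_le_power[OF assms that] window_width_pos[OF assms, of n] that assms
    by simp
  then have "(\<lambda>n. window_width r n) \<in> O(\<lambda>n. (2 * ln (1 / r)) ^ n / real n ^ (n + 1))"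
    by (intro bigoI[where c = "2 * r powr (-2)"] eventually_sequentiallyI[of 2])
  then show ?thesis
    using f_amp_root_unique[OF assms] window_width_le[OF assms] by simp
qed

end
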